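(* Let $(X,\mathbb{A},d)$ be a complete $C^*$-algebra valued metric space, where $\mathbb{A}$ is a unital $C^*$-algebra. Let $T,S:X\to X$ be mappings such that $$d(T^n x,(ST)^n y)\preceq q(x,y)^n\,\delta(x,y)\quad\text{for all }x,y\in X,\ n\in\mathbb{N},$$ where $q:X\times X\to\acute{\mathbb{A}}_+$ satisfies $0\le\|q(x,y)\|<1$ for all $x,y\in X$ and $\delta:X\times X\to\mathbb{A}_+$ is a mapping, and $ST$ denotes the composition $S\circ T$. If $T$ and $ST$ are both orbitally continuous on $X$, then $T$ and $S$ have a unique common fixed point in $X$.
   Context: $\mathbb{A}$ denotes a unital $C^*$-algebra with unit $I$ and zero $\theta$. An element $a\in\mathbb{A}$ is positive, written $a\succeq\theta$, if $a^*=a$ and its spectrum is contained in $[0,\infty)$; $\mathbb{A}_+$ is the set of positive elements, and $a\succeq b$ means $a-b\succeq\theta$. $\acute{\mathbb{A}}_+$ denotes the set of positive elements of $\mathbb{A}$ that commute with every element of $\mathbb{A}$. A $C^*$-algebra valued metric space $(X,\mathbb{A},d)$ is a nonempty set $X$ with $d:X\times X\to\mathbb{A}$ such that for all $x,y,z\in X$: $d(x,y)\succeq\theta$, with $d(x,y)=\theta$ iff $x=y$; $d(x,y)=d(y,x)$; $d(x,y)\preceq d(x,z)+d(z,y)$. A sequence $\{x_n\}$ converges to $x$ if $\|d(x_n,x)\|\to0$, and is Cauchy if $\|d(x_n,x_m)\|\to0$ as $n,m\to\infty$; the space is complete if every Cauchy sequence converges to a point of $X$. A self-map $T$ of $X$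 is orbitally continuous at $u\in X$ if for every $x\in X$ and every increasing sequence of positive integers $\{n_i\}$, $\|d(T^{n_i}x,u)\|\to0$ implies $\|d(T^{n_i+1}x,Tu)\|\to0$ as $i\to\infty$; $T$ is orbitally continuous on $X$ if it is orbitally continuous at every $u\in X$. *)

theory Defs
  imports "HOL-Analysis.Analysis"
begin

text \<open>The complex scalar multiplication is a class
  parameter compatible with the real one.\<close>

class cstar_algebra = real_normed_algebra_1 + banach +
  fixes cstar :: "'a \<Rightarrow> 'a"
    and scaleC :: "complex \<Rightarrow> 'a \<Rightarrow> 'a"
  assumes scaleC_add_right: "scaleC c (x + y) = scaleC c x + scaleC c y"
    and scaleC_add_left: "scaleC (b + c) x = scaleC b x + scaleC c x"
    and scaleC_scaleC: "scaleC b (scaleC c x) = scaleC (b * c) x"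
    and scaleC_one: "scaleC 1 x = x"
    and scaleC_of_real: "scaleC (complex_of_real r) x = scaleR r x"
    and norm_scaleC: "norm (scaleC c x) = cmod c * norm x"
    and scaleC_mult_left: "scaleC c (x * y) = scaleC c x * y"
    and scaleC_mult_right: "scaleC c (x * y) = x * scaleC c y"
    and cstar_cstar: "cstar (cstar x) = x"
    and cstar_add: "cstar (x + y) = cstar x + cstar y"
    and cstar_scaleC: "cstar (scaleC c x) = scaleC (cnj c) (cstar x)"
    and cstar_mult: "cstar (x * y) = cstar y * cstar x"
    and cstar_identity: "norm (cstar x * x) = (norm x)\<^sup>2"

definition cspectrum :: "'a::cstar_algebra \<Rightarrow> complex set" where
  "cspectrum a = {l. \<not> (\<exists>b. b * (a - scaleC l 1) = 1 \<and> (a - scaleC l 1) * b = 1)}"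

definition cpositive :: "'a::cstar_algebra \<Rightarrow> bool" where
  "cpositive a \<longleftrightarrow> cstar a = a \<and> cspectrum a \<subseteq> complex_of_real ` {0..}"

definition cle :: "'a::cstar_algebra \<Rightarrow> 'a \<Rightarrow> bool" where
  "cle a b \<longleftrightarrow> cpositive (b - a)"

definition cpositive_central :: "'a::cstar_algebra \<Rightarrow> bool" where
  "cpositive_central a \<longleftrightarrow> cpositive a \<and> (\<forall>b. a * b = b * a)"

definition cstar_metric :: "('x \<Rightarrow> 'x \<Rightarrow> 'a::cstar_algebra) \<Rightarrow> bool" where
  "cstar_metric d \<longleftrightarrow>
     (\<forall>x y. cpositive (d x y) \<and> (d x y = 0 \<longleftrightarrow> x = y)) \<and>
     (\<forall>x y. d x y = d y x) \<and>
     (\<forall>x y z. cle (d x y) (d x z + d z y))"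

definition cstar_complete :: "('x \<Rightarrow> 'x \<Rightarrow> 'a::cstar_algebra) \<Rightarrow> bool" where
  "cstar_complete d \<longleftrightarrow>
     (\<forall>s::nat \<Rightarrow> 'x.
        (\<forall>e>0. \<exists>N. \<forall>n\<ge>N. \<forall>m\<ge>N. norm (d (s n) (s m)) < e) \<longrightarrow>
        (\<exists>x. (\<lambda>n. norm (d (s n) x)) \<longlonglongrightarrow> 0))"

definition orbitally_continuous_at ::
    "('x \<Rightarrow> 'x \<Rightarrow> 'a::cstar_algebra) \<Rightarrow> ('x \<Rightarrow> 'x) \<Rightarrow> 'x \<Rightarrow> bool" where
  "orbitally_continuous_at d T u \<longleftrightarrow>
     (\<forall>x (n::nat \<Rightarrow> nat). strict_mono n \<longrightarrow> (\<forall>i. 0 < n i) \<longrightarrow>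
        (\<lambda>i. norm (d ((T ^^ n i) x) u)) \<longlonglongrightarrow> 0 \<longrightarrow>
        (\<lambda>i. norm (d ((T ^^ (n i + 1)) x) (T u))) \<longlonglongrightarrow> 0)"

definition orbitally_continuous ::
    "('x \<Rightarrow> 'x \<Rightarrow> 'a::cstar_algebra) \<Rightarrow> ('x \<Rightarrow> 'x) \<Rightarrow> bool" where
  "orbitally_continuous d T \<longleftrightarrow> (\<forall>u. orbitally_continuous_at d T u)"

end

theory Submission
  imports Defs
begin

text \<open>
  The contraction hypothesis is an inequality in the C*-algebra; it yields estimates for the
  real numbers \<open>\<parallel>d x y\<parallel>\<close> because \<open>0 \<preceq> a \<preceq> b\<close> implies \<open>\<parallel>a\<parallel> \<le> \<parallel>b\<parallel>\<close>. This rests on the fact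
  that a self-adjoint \<open>h\<close> whose spectrum lies in the disc of radius \<open>s\<close> has \<open>\<parallel>h\<parallel> \<le> s\<close>.
  If the resolvent \<open>R(\<mu>) = (1 - \<mu>h)\<^sup>-\<^sup>1\<close> exists for \<open>|\<mu>| < \<rho>\<close>, the integral of \<open>\<mu>\<^sup>-\<^sup>n R(\<mu>)\<close>
  over the circle \<open>|\<mu>| = r\<close> does not depend on \<open>r \<in> (0, \<rho>)\<close> and, expanding \<open>R\<close> near \<open>0\<close>,
  equals \<open>2\<pi> h\<^sup>n\<close>; so \<open>\<parallel>h\<^sup>n\<parallel> r\<^sup>n\<close> stays bounded, and \<open>\<parallel>h\<^sup>2\<^sup>^\<^sup>j\<parallel> = \<parallel>h\<parallel>\<^sup>2\<^sup>^\<^sup>j\<close> (the C*-identity)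
  forces \<open>\<parallel>h\<parallel> r \<le> 1\<close>.

  With monotone norms the argument is the classical one: \<open>\<parallel>d(T\<^sup>n x, (ST)\<^sup>n x)\<parallel>\<close> and
  \<open>\<parallel>d(T\<^sup>n\<^sup>+\<^sup>1 x, (ST)\<^sup>n x)\<parallel>\<close> decay geometrically, so the \<open>T\<close>-orbit is Cauchy and both orbits
  converge to one point \<open>u\<close>; orbital continuity makes \<open>u\<close> fixed by \<open>T\<close> and \<open>ST\<close>, hence by \<open>S\<close>,
  and two common fixed points \<open>u, v\<close> satisfy \<open>\<parallel>d(u,v)\<parallel> \<le> \<parallel>q(u,v)\<parallel>\<^sup>n \<parallel>\<delta>(u,v)\<parallel> \<rightarrow> 0\<close>.
\<close>

section \<open>Complex scalars and the involution\<close>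

definition of_complex :: "complex \<Rightarrow> 'a::cstar_algebra" where
  "of_complex c = scaleC c 1"

lemma scaleC_conv_of_complex: "scaleC c (x::'a::cstar_algebra) = of_complex c * x"
  by (metis of_complex_def mult_1_left scaleC_mult_left)

lemma of_complex_commute: "of_complex c * (x::'a::cstar_algebra) = x * of_complex c"
  by (metis of_complex_def mult_1_left mult_1_right scaleC_mult_left scaleC_mult_right)

lemma of_complex_add: "of_complex (b + c) = of_complex b + of_complex c"
  by (simp add: of_complex_def scaleC_add_left)

lemma of_complex_mult: "of_complex (b * c) = of_complex b * of_complex c"
  by (metis of_complex_def scaleC_conv_of_complex scaleC_scaleC)

lemma of_complex_1 [simp]: "of_complex 1 = 1"
  by (simp add: of_complex_def scaleC_one)

lemma of_complex_of_real [simp]: "of_complex (complex_of_real r) = of_real r"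
  unfolding of_complex_def by (subst scaleC_of_real) (simp add: of_real_def)

lemma of_complex_0 [simp]: "of_complex 0 = 0"
  using of_complex_of_real[of 0] by simp

lemma of_complex_minus: "of_complex (- c) = - of_complex c"
  by (metis add.right_inverse minus_unique of_complex_0 of_complex_add)

lemma of_complex_diff: "of_complex (b - c) = of_complex b - of_complex c"
  by (metis diff_conv_add_uminus of_complex_add of_complex_minus)

lemma norm_of_complex [simp]: "norm (of_complex c) = cmod c"
  by (simp add: of_complex_def norm_scaleC)

lemma norm_of_complex_mult [simp]: "norm (of_complex c * (y::'a::cstar_algebra)) = cmod c * norm y"
  by (metis scaleC_conv_of_complex norm_scaleC)

lemma of_complex_scaleR: "(of_complex (r *\<^sub>R c) :: 'a::cstar_algebra) = r *\<^sub>R of_complex c"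
proof -
  have "of_complex (r *\<^sub>R c) = (of_real r :: 'a) * of_complex c"
    by (simp add: scaleR_conv_of_real of_complex_mult)
  then show ?thesis by (simp add: scaleR_conv_of_real)
qed

lemma of_complex_mult_inverse: "c \<noteq> 0 \<Longrightarrow> of_complex c * of_complex (inverse c) = 1"
  by (metis of_complex_mult of_complex_1 right_inverse)

lemma of_complex_inverse_mult_cancel:
  "c \<noteq> 0 \<Longrightarrow> of_complex (inverse c) * (of_complex c * y) = (y::'a::cstar_algebra)"
  by (metis mult.assoc mult_1_left of_complex_mult_inverse inverse_nonzero_iff_nonzero
      inverse_inverse_eq)

lemma power_of_complex_mult:
  "(of_complex c * (y::'a::cstar_algebra)) ^ m = of_complex (c ^ m) * y ^ m"
proof (induction m)
  case (Suc m)
  have "(of_complex c * y) ^ Suc m = of_complex c * y * (of_complex (c ^ m) * y ^ m)"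
    by (simp add: Suc)
  also have "\<dots> = of_complex c * (y * of_complex (c ^ m)) * y ^ m"
    by (simp add: mult.assoc)
  also have "\<dots> = of_complex c * (of_complex (c ^ m) * y) * y ^ m"
    by (simp add: of_complex_commute[of "c ^ m" y])
  also have "\<dots> = of_complex c * of_complex (c ^ m) * (y * y ^ m)"
    by (simp add: mult.assoc)
  finally show ?case by (simp add: of_complex_mult)
qed simp

lemma bounded_linear_of_complex_mult: "bounded_linear (\<lambda>c. of_complex c * (y::'a::cstar_algebra))"
proof
  show "of_complex (b + c) * y = of_complex b * y + of_complex c * y" for b c
    by (simp add: of_complex_add distrib_right)
  show "of_complex (r *\<^sub>R b) * y = r *\<^sub>R (of_complex b * y)" for r b
    by (simp add: of_complex_scaleR)
  show "\<exists>K. \<forall>c. norm (of_complex c * y) \<le> norm c * K"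
    by (rule exI[of _ "norm y"]) simp
qed

lemma bounded_linear_of_complex: "bounded_linear (of_complex :: complex \<Rightarrow> 'a::cstar_algebra)"
  using bounded_linear_of_complex_mult[of "1::'a"] by simp

lemma continuous_on_of_complex [continuous_intros]:
  "continuous_on S f \<Longrightarrow> continuous_on S (\<lambda>y. (of_complex (f y) :: 'a::cstar_algebra))"
  using bounded_linear.continuous_on[OF bounded_linear_of_complex] by blast

lemma cstar_1 [simp]: "cstar 1 = (1::'a::cstar_algebra)"
  by (metis cstar_cstar cstar_mult mult_1_left mult_1_right)

lemma cstar_of_complex: "cstar (of_complex c) = of_complex (cnj c)"
  by (simp add: of_complex_def cstar_scaleC)

lemma cstar_minus: "cstar (- x) = - cstar (x::'a::cstar_algebra)"
  by (metis add.right_inverse cstar_add add_0_right cstar_cstar minus_unique)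

lemma cstar_diff: "cstar (x - y) = cstar x - cstar (y::'a::cstar_algebra)"
  by (metis diff_conv_add_uminus cstar_add cstar_minus)

lemma cstar_power: "cstar (x ^ n) = cstar (x::'a::cstar_algebra) ^ n"
proof (induction n)
  case (Suc n)
  have "cstar (x ^ Suc n) = cstar (x ^ n * x)" by (simp add: power_commutes)
  also have "\<dots> = cstar x * cstar x ^ n" by (simp add: cstar_mult Suc)
  finally show ?case by simp
qed simp

lemma norm_power2_selfadjoint:
  assumes "cstar (h::'a::cstar_algebra) = h"
  shows "norm (h ^ (2 ^ j)) = norm h ^ (2 ^ j)"
proof (induction j)
  case (Suc j)
  have "h ^ (2 ^ Suc j) = h ^ (2 ^ j) * h ^ (2 ^ j)"
    by (simp add: power_add[symmetric] mult_2)
  then have "norm (h ^ (2 ^ Suc j)) = (norm (h ^ (2 ^ j))) ^ 2"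
    using cstar_identity[of "h ^ (2 ^ j)"] by (simp add: cstar_power assms)
  then show ?case using Suc by (simp add: power_mult[symmetric] mult.commute)
qed simp

lemma norm_mult3_le: "norm ((a::'a::real_normed_algebra) * b * c) \<le> norm a * norm b * norm c"
  by (meson mult_right_mono norm_ge_zero norm_mult_ineq order_trans)

section \<open>Invertible elements\<close>

definition invertible_elem :: "'a::cstar_algebra \<Rightarrow> bool" where
  "invertible_elem x \<longleftrightarrow> (\<exists>y. y * x = 1 \<and> x * y = 1)"

lemma invertible_elem_1 [simp]: "invertible_elem (1::'a::cstar_algebra)"
  unfolding invertible_elem_def by auto

definition elem_inverse :: "'a::cstar_algebra \<Rightarrow> 'a" where
  "elem_inverse x = (SOME y. y * x = 1 \<and> x * y = 1)"

lemma elem_inverse: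
  assumes "invertible_elem x"
  shows "elem_inverse x * x = 1" "x * elem_inverse x = 1"
  using someI_ex[OF assms[unfolded invertible_elem_def]] unfolding elem_inverse_def by auto

lemma invertible_elem_mult: "invertible_elem a \<Longrightarrow> invertible_elem b \<Longrightarrow> invertible_elem (a * b)"
  unfolding invertible_elem_def by (metis mult.assoc mult_1_left)

lemma invertible_elem_of_complex: "c \<noteq> 0 \<Longrightarrow> invertible_elem (of_complex c :: 'a::cstar_algebra)"
  unfolding invertible_elem_def by (metis of_complex_mult_inverse of_complex_commute)

lemma invertible_elem_minus: "invertible_elem a \<Longrightarrow> invertible_elem (- a)"
  unfolding invertible_elem_def by (metis minus_mult_minus)

lemma invertible_elem_scale:
  "c \<noteq> 0 \<Longrightarrow> invertible_elem (of_complex c * a) \<longleftrightarrow> invertible_elem (a::'a::cstar_algebra)"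
  by (metis invertible_elem_mult invertible_elem_of_complex mult.assoc mult_1_left
      of_complex_commute of_complex_mult_inverse inverse_nonzero_iff_nonzero)

lemma cspectrum_iff: "l \<in> cspectrum (a::'a::cstar_algebra) \<longleftrightarrow> \<not> invertible_elem (a - of_complex l)"
  unfolding cspectrum_def invertible_elem_def of_complex_def by simp

lemma sum_powers_mult_one_minus: "(\<Sum>m<N. (z::'a::ring_1) ^ m) * (1 - z) = 1 - z ^ N"
proof (induction N)
  case (Suc N)
  have "(\<Sum>m<Suc N. z ^ m) * (1 - z) = (\<Sum>m<N. z ^ m) * (1 - z) + z ^ N * (1 - z)"
    by (simp add: distrib_right)
  also have "\<dots> = 1 - z ^ N * z" using Suc by (simp add: algebra_simps)
  finally show ?case by (simp add: power_commutes)
qed simp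

lemma invertible_elem_one_minus:
  fixes z :: "'a::cstar_algebra"
  assumes "norm z < 1"
  shows "invertible_elem (1 - z)"
proof -
  have s: "summable (\<lambda>n. z ^ n)"
    by (rule summable_comparison_test[OF _ summable_geometric[of "norm z"]])
      (use assms in \<open>auto intro: norm_power_ineq\<close>)
  define S where "S = suminf (\<lambda>n. z ^ n)"
  have S: "S = 1 + suminf (\<lambda>n. z ^ Suc n)"
    unfolding S_def using suminf_split_head[OF s] by simp
  have "S * z = suminf (\<lambda>n. z ^ Suc n)"
    unfolding S_def by (simp add: suminf_mult2[OF s] power_commutes)
  moreover have "z * S = suminf (\<lambda>n. z ^ Suc n)"
    unfolding S_def by (simp add: suminf_mult[OF s, symmetric])
  ultimately have "S * (1 - z) = 1" "(1 - z) * S = 1"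
    using S by (simp_all add: algebra_simps)
  then show ?thesis unfolding invertible_elem_def by blast
qed

lemma invertible_elem_diff_of_complex:
  fixes h :: "'a::cstar_algebra"
  assumes "norm h < cmod l"
  shows "invertible_elem (h - of_complex l)"
proof -
  have l: "l \<noteq> 0" using assms norm_ge_zero[of h] by auto
  have "norm (of_complex (inverse l) * h) < 1"
    using assms l by (simp add: norm_inverse norm_divide divide_simps mult.commute)
  then have "invertible_elem (of_complex (- l) * (1 - of_complex (inverse l) * h))"
    using l by (simp add: invertible_elem_scale invertible_elem_one_minus)
  moreover have "of_complex (- l) * (1 - of_complex (inverse l) * h) = h - of_complex l"
    using of_complex_mult_inverse[OF l, where 'a='a]
    by (simp add: of_complex_minus algebra_simps mult.assoc[symmetric])
  ultimately show ?thesis by simp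
qed

section \<open>The resolvent on a disc\<close>

lemma has_field_derivative_inverse_power:
  assumes "\<mu> \<noteq> 0"
  shows "((\<lambda>\<mu>. inverse \<mu> ^ n) has_field_derivative (- of_nat n * inverse \<mu> ^ Suc n)) (at \<mu>)"
proof -
  have "((\<lambda>\<mu>. inverse \<mu> ^ n) has_field_derivative
      (of_nat n * (- (inverse \<mu> ^ Suc (Suc 0)) * inverse \<mu> ^ (n - Suc 0)))) (at \<mu>)"
    by (rule DERIV_power[OF DERIV_inverse[OF assms]])
  moreover have "of_nat n * (- (inverse \<mu> ^ Suc (Suc 0)) * inverse \<mu> ^ (n - Suc 0))
      = - of_nat n * inverse \<mu> ^ Suc n"
    by (cases n) (simp_all add: algebra_simps)
  ultimately show ?thesis by (rule DERIV_cong)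
qed

lemma has_integral_cis_multiple:
  assumes "j \<noteq> 0"
  shows "((\<lambda>\<theta>. cis (- (real j * \<theta>))) has_integral 0) {0..2*pi}"
proof -
  have "((\<lambda>\<theta>. \<i> / of_nat j * cis (- (real j * \<theta>))) has_vector_derivative cis (- (real j * \<theta>)))
      (at \<theta> within S)" for \<theta> S
    unfolding has_vector_derivative_def
    by (auto intro!: derivative_eq_intros simp: scaleR_conv_of_real assms fun_eq_iff algebra_simps)
  then have "((\<lambda>\<theta>. cis (- (real j * \<theta>))) has_integral
      (\<i> / of_nat j * cis (- (real j * (2*pi))) - \<i> / of_nat j * cis (- (real j * 0)))) {0..2*pi}"
    by (intro fundamental_theorem_of_calculus) auto
  moreover have "- (real j * (2*pi)) = 2 * pi * (- real j)" by simp
  then have "cis (- (real j * (2*pi))) = 1"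
    by (simp only: cis_multiple_2pi Ints_minus Ints_of_nat)
  ultimately show ?thesis by simp
qed

lemma has_integral_inverse_circle_power:
  assumes "j \<noteq> 0"
  shows "((\<lambda>\<theta>. of_complex (inverse (complex_of_real r * cis \<theta>) ^ j) * (y::'a::cstar_algebra))
    has_integral 0) {0..2*pi}"
proof -
  have "inverse (complex_of_real r * cis \<theta>) ^ j = complex_of_real (inverse r ^ j) * cis (- (real j * \<theta>))"
    for \<theta>
  proof -
    have "cis (- \<theta>) ^ j = cis (- (real j * \<theta>))" by (simp only: Complex.DeMoivre mult_minus_right)
    then show ?thesis by (simp add: power_mult_distrib of_real_inverse)
  qed
  moreover have "((\<lambda>\<theta>. complex_of_real (inverse r ^ j) * cis (- (real j * \<theta>))) has_integral 0) {0..2*pi}"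
    using has_integral_mult_right[OF has_integral_cis_multiple[OF assms]] by simp
  ultimately have "((\<lambda>\<theta>. inverse (complex_of_real r * cis \<theta>) ^ j) has_integral 0) {0..2*pi}"
    by simp
  from has_integral_linear[OF this bounded_linear_of_complex_mult[of y]] show ?thesis
    by (simp add: o_def)
qed

locale resolvent_disc =
  fixes x :: "'a::cstar_algebra" and \<rho> :: real
  assumes radius_pos: "\<rho> > 0"
    and invertible_resolvent: "\<And>\<mu>. cmod \<mu> < \<rho> \<Longrightarrow> invertible_elem (1 - of_complex \<mu> * x)"
begin

definition res :: "complex \<Rightarrow> 'a" where
  "res \<mu> = elem_inverse (1 - of_complex \<mu> * x)"

lemma res_left: "cmod \<mu> < \<rho> \<Longrightarrow> res \<mu> * (1 - of_complex \<mu> * x) = 1"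
  and res_right: "cmod \<mu> < \<rho> \<Longrightarrow> (1 - of_complex \<mu> * x) * res \<mu> = 1"
  unfolding res_def using elem_inverse invertible_resolvent by blast+

lemma res_0: "res 0 = 1"
  using res_left[of 0] radius_pos by simp

lemma res_diff:
  assumes "cmod \<mu> < \<rho>" "cmod \<nu> < \<rho>"
  shows "res \<nu> - res \<mu> = of_complex (\<nu> - \<mu>) * (res \<nu> * x * res \<mu>)"
proof -
  have "res \<nu> = res \<nu> * ((1 - of_complex \<mu> * x) * res \<mu>)" using res_right[OF assms(1)] by simp
  moreover have "res \<mu> = (res \<nu> * (1 - of_complex \<nu> * x)) * res \<mu>" using res_left[OF assms(2)] by simp
  ultimately have "res \<nu> - res \<mu> = res \<nu> * ((of_complex \<nu> - of_complex \<mu>) * x) * res \<mu>"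
    by (simp add: algebra_simps)
  also have "\<dots> = of_complex (\<nu> - \<mu>) * (res \<nu> * x * res \<mu>)"
    by (simp add: of_complex_diff[symmetric] mult.assoc[symmetric] of_complex_commute[of "\<nu> - \<mu>" "res \<nu>"])
  finally show ?thesis .
qed

lemma norm_res_le_twice:
  assumes "cmod \<mu> < \<rho>" "cmod \<nu> < \<rho>" "cmod (\<nu> - \<mu>) * norm x * norm (res \<mu>) \<le> 1/2"
  shows "norm (res \<nu>) \<le> 2 * norm (res \<mu>)"
proof -
  have "norm (res \<nu>) = norm (res \<mu> + of_complex (\<nu> - \<mu>) * (res \<nu> * x * res \<mu>))"
    using res_diff[OF assms(1,2)] by (metis add_diff_cancel_left' diff_add_cancel)
  also have "\<dots> \<le> norm (res \<mu>) + cmod (\<nu> - \<mu>) * (norm (res \<nu>) * norm x * norm (res \<mu>))"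
    by (rule order_trans[OF norm_triangle_ineq]) (simp add: mult_left_mono norm_mult3_le)
  also have "\<dots> = norm (res \<mu>) + norm (res \<nu>) * (cmod (\<nu> - \<mu>) * norm x * norm (res \<mu>))"
    by (simp add: algebra_simps)
  also have "\<dots> \<le> norm (res \<mu>) + norm (res \<nu>) * (1/2)"
    by (rule add_left_mono, rule mult_left_mono[OF assms(3)]) simp
  finally show ?thesis by simp
qed

definition res_deriv :: "complex \<Rightarrow> 'a" where
  "res_deriv \<mu> = res \<mu> * x * res \<mu>"

lemma norm_res_taylor_le:
  assumes "cmod \<mu> < \<rho>" "cmod \<nu> < \<rho>" "cmod (\<nu> - \<mu>) * norm x * norm (res \<mu>) \<le> 1/2"
  shows "norm (res \<nu> - res \<mu> - of_complex (\<nu> - \<mu>) * res_deriv \<mu>)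
    \<le> cmod (\<nu> - \<mu>) ^ 2 * (2 * norm x ^ 2 * norm (res \<mu>) ^ 3)"
proof -
  have eq: "res \<nu> - res \<mu> - of_complex (\<nu> - \<mu>) * res_deriv \<mu>
      = of_complex (\<nu> - \<mu>) * ((res \<nu> - res \<mu>) * x * res \<mu>)"
    using res_diff[OF assms(1,2)] by (simp add: res_deriv_def algebra_simps)
  have "norm (res \<nu> - res \<mu>) \<le> cmod (\<nu> - \<mu>) * (norm (res \<nu>) * norm x * norm (res \<mu>))"
    unfolding res_diff[OF assms(1,2)] by (simp add: mult_left_mono norm_mult3_le)
  also have "\<dots> \<le> cmod (\<nu> - \<mu>) * (2 * norm (res \<mu>) * norm x * norm (res \<mu>))"
    using norm_res_le_twice[OF assms] by (intro mult_left_mono mult_right_mono) auto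
  finally have diff: "norm (res \<nu> - res \<mu>) \<le> cmod (\<nu> - \<mu>) * (2 * norm (res \<mu>) * norm x * norm (res \<mu>))" .
  have "norm (res \<nu> - res \<mu> - of_complex (\<nu> - \<mu>) * res_deriv \<mu>)
      \<le> cmod (\<nu> - \<mu>) * (norm (res \<nu> - res \<mu>) * norm x * norm (res \<mu>))"
    unfolding eq by (simp add: mult_left_mono norm_mult3_le)
  also have "\<dots> \<le> cmod (\<nu> - \<mu>) * ((cmod (\<nu> - \<mu>) * (2 * norm (res \<mu>) * norm x * norm (res \<mu>))) * norm x * norm (res \<mu>))"
    by (intro mult_left_mono mult_right_mono diff) auto
  also have "\<dots> = cmod (\<nu> - \<mu>) ^ 2 * (2 * norm x ^ 2 * norm (res \<mu>) ^ 3)"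
    by (simp add: power2_eq_square power3_eq_cube algebra_simps)
  finally show ?thesis .
qed

lemma has_derivative_res:
  assumes "cmod \<mu> < \<rho>"
  shows "(res has_derivative (\<lambda>h. of_complex h * res_deriv \<mu>)) (at \<mu>)"
  unfolding has_derivative_iff_norm
proof
  show "bounded_linear (\<lambda>h. of_complex h * res_deriv \<mu>)" by (rule bounded_linear_of_complex_mult)
  define C where "C = 2 * norm x ^ 2 * norm (res \<mu>) ^ 3"
  have "\<forall>\<^sub>F \<nu> in at \<mu>. cmod \<nu> < \<rho>"
    using order_tendstoD(2)[OF tendsto_norm[OF tendsto_ident_at] assms] .
  moreover have "((\<lambda>\<nu>. cmod (\<nu> - \<mu>) * norm x * norm (res \<mu>)) \<longlongrightarrow> 0) (at \<mu>)"
    by (intro tendsto_mult_left_zero tendsto_norm_zero LIM_zero tendsto_ident_at)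
  then have "\<forall>\<^sub>F \<nu> in at \<mu>. cmod (\<nu> - \<mu>) * norm x * norm (res \<mu>) < 1/2"
    by (rule order_tendstoD(2)) simp
  ultimately have "\<forall>\<^sub>F \<nu> in at \<mu>.
      norm (norm (res \<nu> - res \<mu> - of_complex (\<nu> - \<mu>) * res_deriv \<mu>) / norm (\<nu> - \<mu>))
        \<le> cmod (\<nu> - \<mu>) * C"
  proof eventually_elim
    case (elim \<nu>)
    have "norm (res \<nu> - res \<mu> - of_complex (\<nu> - \<mu>) * res_deriv \<mu>) \<le> cmod (\<nu> - \<mu>) ^ 2 * C"
      unfolding C_def by (rule norm_res_taylor_le[OF assms elim(1) less_imp_le[OF elim(2)]])
    then have "norm (res \<nu> - res \<mu> - of_complex (\<nu> - \<mu>) * res_deriv \<mu>) / cmod (\<nu> - \<mu>)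
        \<le> cmod (\<nu> - \<mu>) ^ 2 * C / cmod (\<nu> - \<mu>)"
      by (simp add: divide_right_mono)
    then show ?case by (cases "\<nu> = \<mu>") (simp_all add: power2_eq_square)
  qed
  moreover have "((\<lambda>\<nu>. cmod (\<nu> - \<mu>) * C) \<longlongrightarrow> 0) (at \<mu>)"
    by (intro tendsto_mult_left_zero tendsto_norm_zero LIM_zero tendsto_ident_at)
  ultimately show "((\<lambda>\<nu>. norm (res \<nu> - res \<mu> - of_complex (\<nu> - \<mu>) * res_deriv \<mu>) / norm (\<nu> - \<mu>))
      \<longlongrightarrow> 0) (at \<mu>)"
    by (rule Lim_null_comparison)
qed

lemma continuous_on_res: "continuous_on (ball 0 \<rho>) res"
  by (intro continuous_at_imp_continuous_on ballI has_derivative_continuous[OF has_derivative_res]) simp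

definition weighted_res :: "nat \<Rightarrow> complex \<Rightarrow> 'a" where
  "weighted_res n \<mu> = of_complex (inverse \<mu> ^ n) * res \<mu>"

definition weighted_res_deriv :: "nat \<Rightarrow> complex \<Rightarrow> 'a" where
  "weighted_res_deriv n \<mu> =
     of_complex (inverse \<mu> ^ n) * res_deriv \<mu> + of_complex (- of_nat n * inverse \<mu> ^ Suc n) * res \<mu>"

lemma has_derivative_weighted_res:
  assumes "cmod \<mu> < \<rho>" "\<mu> \<noteq> 0"
  shows "(weighted_res n has_derivative (\<lambda>h. of_complex h * weighted_res_deriv n \<mu>)) (at \<mu>)"
proof -
  have "((\<lambda>\<mu>. of_complex (inverse \<mu> ^ n) :: 'a) has_derivative
      (\<lambda>h. of_complex (h * (- of_nat n * inverse \<mu> ^ Suc n)))) (at \<mu>)"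
    using bounded_linear.has_derivative[OF bounded_linear_of_complex
        has_field_derivative_inverse_power[OF assms(2), of n, unfolded has_field_derivative_def]]
    by (simp add: mult.commute)
  from has_derivative_mult[OF this has_derivative_res[OF assms(1)]]
  have "(weighted_res n has_derivative (\<lambda>h. of_complex (inverse \<mu> ^ n) * (of_complex h * res_deriv \<mu>)
      + of_complex (h * (- of_nat n * inverse \<mu> ^ Suc n)) * res \<mu>)) (at \<mu>)"
    unfolding weighted_res_def .
  moreover have "of_complex (inverse \<mu> ^ n) * (of_complex h * res_deriv \<mu>)
      + of_complex (h * (- of_nat n * inverse \<mu> ^ Suc n)) * res \<mu> = of_complex h * weighted_res_deriv n \<mu>"
    for h
  proof -
    have "of_complex (inverse \<mu> ^ n) * (of_complex h * res_deriv \<mu>)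
        = of_complex h * (of_complex (inverse \<mu> ^ n) * res_deriv \<mu>)"
      by (simp add: mult.assoc[symmetric] of_complex_mult[symmetric] mult.commute)
    then show ?thesis
      by (simp add: weighted_res_deriv_def of_complex_mult distrib_left mult.assoc of_complex_minus right_diff_distrib)
  qed
  ultimately show ?thesis by simp
qed

lemma has_vector_derivative_weighted_res_comp:
  assumes "(\<gamma> has_vector_derivative \<gamma>') (at t within S)" "cmod (\<gamma> t) < \<rho>" "\<gamma> t \<noteq> 0"
  shows "((\<lambda>t. weighted_res n (\<gamma> t)) has_vector_derivative
    (of_complex \<gamma>' * weighted_res_deriv n (\<gamma> t))) (at t within S)"
  using has_derivative_compose[OF assms(1)[unfolded has_vector_derivative_def]
      has_derivative_weighted_res[OF assms(2,3)]]
  unfolding has_vector_derivative_def by (simp add: of_complex_scaleR)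

lemma circle_in_disc: "0 < r \<Longrightarrow> r < \<rho> \<Longrightarrow> complex_of_real r * cis \<theta> \<in> ball 0 \<rho> - {0}"
  by (simp add: norm_mult)

lemma continuous_on_res_circle:
  assumes "0 < r" "r < \<rho>"
  shows "continuous_on S (\<lambda>\<theta>. res (complex_of_real r * cis \<theta>))"
  by (rule continuous_on_compose2[OF continuous_on_res])
    (use circle_in_disc[OF assms] in \<open>auto intro!: continuous_intros\<close>)

lemma continuous_on_weighted_res_circle:
  assumes "0 < r" "r < \<rho>"
  shows "continuous_on S (\<lambda>\<theta>. weighted_res n (complex_of_real r * cis \<theta>))"
  unfolding weighted_res_def using assms
  by (intro continuous_intros continuous_on_res_circle) (auto simp: norm_mult)

definition circle_integral :: "nat \<Rightarrow> real \<Rightarrow> 'a" where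
  "circle_integral n r = integral {0..2*pi} (\<lambda>\<theta>. weighted_res n (complex_of_real r * cis \<theta>))"

definition radial_deriv :: "nat \<Rightarrow> real \<Rightarrow> real \<Rightarrow> 'a" where
  "radial_deriv n r \<theta> = of_complex (cis \<theta>) * weighted_res_deriv n (complex_of_real r * cis \<theta>)"

lemma continuous_on_radial_deriv: "continuous_on ({0<..<\<rho>} \<times> S) (\<lambda>(r, \<theta>). radial_deriv n r \<theta>)"
proof -
  have "continuous_on ({0<..<\<rho>} \<times> S) (\<lambda>p. res (complex_of_real (fst p) * cis (snd p)))"
    by (rule continuous_on_compose2[OF continuous_on_res])
      (use circle_in_disc in \<open>auto intro!: continuous_intros\<close>)
  then show ?thesis
    unfolding radial_deriv_def weighted_res_deriv_def res_deriv_def split_beta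
    by (intro continuous_intros) (auto simp: norm_mult)
qed

text \<open>
  Along the circle, \<open>\<partial>\<^sub>\<theta>\<close> of the integrand is \<open>i r\<close> times its radial derivative, and the
  \<open>\<theta>\<close>-integral of a \<open>\<theta>\<close>-derivative over a full period vanishes.
\<close>

lemma has_integral_radial_deriv:
  assumes "0 < r" "r < \<rho>"
  shows "(radial_deriv n r has_integral 0) {0..2*pi}"
proof -
  let ?w = "\<lambda>\<theta>. weighted_res_deriv n (complex_of_real r * cis \<theta>)"
  have c: "complex_of_real r * \<i> \<noteq> 0" using assms by simp
  have "((\<lambda>\<theta>. weighted_res n (complex_of_real r * cis \<theta>)) has_vector_derivative
      of_complex (complex_of_real r * (\<i> * cis \<theta>)) * ?w \<theta>) (at \<theta> within {0..2*pi})" for \<theta>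
    using circle_in_disc[OF assms, of \<theta>]
    by (intro has_vector_derivative_weighted_res_comp)
      (auto intro!: derivative_eq_intros simp: has_vector_derivative_def scaleR_conv_of_real)
  then have "((\<lambda>\<theta>. of_complex (complex_of_real r * (\<i> * cis \<theta>)) * ?w \<theta>) has_integral 0) {0..2*pi}"
    using fundamental_theorem_of_calculus[of 0 "2*pi"] by fastforce
  moreover have "of_complex (complex_of_real r * (\<i> * cis \<theta>)) * ?w \<theta>
      = of_complex (complex_of_real r * \<i>) * radial_deriv n r \<theta>" for \<theta>
    by (simp add: radial_deriv_def of_complex_mult mult.assoc)
  ultimately have "((\<lambda>\<theta>. of_complex (complex_of_real r * \<i>) * radial_deriv n r \<theta>) has_integral 0) {0..2*pi}"
    by simp
  from has_integral_mult_right[OF this, of "of_complex (inverse (complex_of_real r * \<i>))"]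
  have "((\<lambda>\<theta>. of_complex (inverse (complex_of_real r * \<i>)) * (of_complex (complex_of_real r * \<i>) * radial_deriv n r \<theta>))
      has_integral of_complex (inverse (complex_of_real r * \<i>)) * 0) {0..2*pi}" .
  then show ?thesis unfolding of_complex_inverse_mult_cancel[OF c] mult_zero_right .
qed

lemma circle_integral_constant: "\<exists>c. \<forall>r\<in>{0<..<\<rho>}. circle_integral n r = c"
proof (rule has_derivative_zero_constant)
  fix r assume r: "r \<in> {0<..<\<rho>}"
  have "(circle_integral n has_vector_derivative integral (cbox 0 (2*pi)) (radial_deriv n r))
      (at r within {0<..<\<rho>})"
    unfolding circle_integral_def box_real(2)[symmetric]
  proof (rule leibniz_rule_vector_derivative)
    fix s t assume "s \<in> {0<..<\<rho>}"
    then show "((\<lambda>s. weighted_res n (complex_of_real s * cis t)) has_vector_derivative radial_deriv n s t)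
        (at s within {0<..<\<rho>})"
      unfolding radial_deriv_def using circle_in_disc[of s t]
      by (intro has_vector_derivative_weighted_res_comp)
        (auto intro!: derivative_eq_intros simp: has_vector_derivative_def scaleR_conv_of_real)
  next
    fix s assume "s \<in> {0<..<\<rho>}"
    then show "(\<lambda>\<theta>. weighted_res n (complex_of_real s * cis \<theta>)) integrable_on cbox 0 (2*pi)"
      unfolding box_real(2) by (intro integrable_continuous_interval continuous_on_weighted_res_circle) auto
  qed (use r continuous_on_radial_deriv in auto)
  moreover have "integral (cbox 0 (2*pi)) (radial_deriv n r) = 0"
    using has_integral_radial_deriv[of r n] r by (simp add: integral_unique)
  ultimately show "(circle_integral n has_derivative (\<lambda>h. 0)) (at r within {0<..<\<rho>})"
    by (simp add: has_vector_derivative_def)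
qed simp

lemma res_expand:
  assumes "cmod \<mu> < \<rho>"
  shows "res \<mu> = (\<Sum>m<N. of_complex (\<mu> ^ m) * x ^ m) + of_complex (\<mu> ^ N) * x ^ N * res \<mu>"
proof -
  define z where "z = of_complex \<mu> * x"
  have "(\<Sum>m<N. z ^ m) * (1 - z) * res \<mu> = (1 - z ^ N) * res \<mu>"
    by (simp add: sum_powers_mult_one_minus)
  then have "(\<Sum>m<N. z ^ m) = res \<mu> - z ^ N * res \<mu>"
    using res_right[OF assms] unfolding z_def by (simp add: mult.assoc left_diff_distrib)
  then show ?thesis unfolding z_def power_of_complex_mult by (simp add: algebra_simps)
qed

lemma weighted_res_expand:
  assumes "cmod \<mu> < \<rho>" "\<mu> \<noteq> 0"
  shows "weighted_res n \<mu>
    = (\<Sum>m<n. of_complex (inverse \<mu> ^ (n - m)) * x ^ m) + x ^ n + of_complex \<mu> * (x ^ Suc n * res \<mu>)"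
proof -
  have cancel: "inverse \<mu> ^ n * \<mu> ^ m = inverse \<mu> ^ (n - m)" if "m \<le> n" for m
  proof -
    have "inverse \<mu> ^ n * \<mu> ^ m = inverse \<mu> ^ (n - m) * (inverse \<mu> ^ m * \<mu> ^ m)"
      using that by (simp add: power_add[symmetric] mult.assoc[symmetric])
    also have "inverse \<mu> ^ m * \<mu> ^ m = 1"
      using assms(2) by (simp add: power_mult_distrib[symmetric])
    finally show ?thesis by simp
  qed
  have "weighted_res n \<mu> = of_complex (inverse \<mu> ^ n)
      * ((\<Sum>m<Suc n. of_complex (\<mu> ^ m) * x ^ m) + of_complex (\<mu> ^ Suc n) * x ^ Suc n * res \<mu>)"
    unfolding weighted_res_def using res_expand[OF assms(1), of "Suc n"] by simp
  also have "\<dots> = (\<Sum>m<Suc n. of_complex (inverse \<mu> ^ n * \<mu> ^ m) * x ^ m)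
      + of_complex (inverse \<mu> ^ n * \<mu> ^ Suc n) * (x ^ Suc n * res \<mu>)"
    by (simp add: distrib_left sum_distrib_left of_complex_mult mult.assoc)
  also have "(\<Sum>m<Suc n. of_complex (inverse \<mu> ^ n * \<mu> ^ m) * x ^ m)
      = (\<Sum>m<n. of_complex (inverse \<mu> ^ (n - m)) * x ^ m) + x ^ n"
    using cancel[of n] by (simp add: cancel)
  also have "inverse \<mu> ^ n * \<mu> ^ Suc n = \<mu>"
    using cancel[of n] by (simp add: mult.assoc[symmetric])
  finally show ?thesis .
qed

definition circle_remainder :: "nat \<Rightarrow> real \<Rightarrow> 'a" where
  "circle_remainder n r = integral {0..2*pi}
     (\<lambda>\<theta>. of_complex (complex_of_real r * cis \<theta>) * (x ^ Suc n * res (complex_of_real r * cis \<theta>)))"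

lemma has_integral_circle_remainder:
  assumes "0 < r" "r < \<rho>"
  shows "((\<lambda>\<theta>. of_complex (complex_of_real r * cis \<theta>) * (x ^ Suc n * res (complex_of_real r * cis \<theta>)))
    has_integral circle_remainder n r) {0..2*pi}"
  unfolding circle_remainder_def
  by (intro integrable_integral integrable_continuous_interval continuous_intros
      continuous_on_res_circle[OF assms])

lemma circle_integral_eq:
  assumes "0 < r" "r < \<rho>"
  shows "circle_integral n r = (2 * pi) *\<^sub>R x ^ n + circle_remainder n r"
proof -
  have "((\<lambda>\<theta>. \<Sum>m<n. of_complex (inverse (complex_of_real r * cis \<theta>) ^ (n - m)) * x ^ m)
      has_integral (\<Sum>m<n. 0)) {0..2*pi}"
    by (rule has_integral_sum) (simp, rule has_integral_inverse_circle_power, simp)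
  then have "((\<lambda>\<theta>. (\<Sum>m<n. of_complex (inverse (complex_of_real r * cis \<theta>) ^ (n - m)) * x ^ m) + x ^ n
        + of_complex (complex_of_real r * cis \<theta>) * (x ^ Suc n * res (complex_of_real r * cis \<theta>)))
      has_integral ((\<Sum>m<n. 0) + (2 * pi) *\<^sub>R x ^ n + circle_remainder n r)) {0..2*pi}"
    using has_integral_const_real[of "x ^ n" 0 "2*pi"]
    by (intro has_integral_add has_integral_circle_remainder[OF assms]) auto
  moreover have "weighted_res n (complex_of_real r * cis \<theta>)
      = (\<Sum>m<n. of_complex (inverse (complex_of_real r * cis \<theta>) ^ (n - m)) * x ^ m) + x ^ n
        + of_complex (complex_of_real r * cis \<theta>) * (x ^ Suc n * res (complex_of_real r * cis \<theta>))" for \<theta>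
    using weighted_res_expand circle_in_disc[OF assms, of \<theta>] by auto
  ultimately show ?thesis
    unfolding circle_integral_def by (intro integral_unique) simp
qed

lemma norm_circle_remainder_le:
  assumes "0 < r" "r < \<rho>" "r * norm x \<le> 1/2"
  shows "norm (circle_remainder n r) \<le> 2 * r * norm (x ^ Suc n) * (2 * pi)"
proof -
  have "norm (of_complex (complex_of_real r * cis \<theta>) * (x ^ Suc n * res (complex_of_real r * cis \<theta>)))
      \<le> 2 * r * norm (x ^ Suc n)" for \<theta>
  proof -
    let ?\<mu> = "complex_of_real r * cis \<theta>"
    have cm: "cmod ?\<mu> = r" using assms by (simp add: norm_mult)
    have "norm (res ?\<mu>) \<le> 2"
      using norm_res_le_twice[of 0 ?\<mu>] cm assms radius_pos by (simp add: res_0)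
    then have "norm (x ^ Suc n * res ?\<mu>) \<le> norm (x ^ Suc n) * 2"
      by (intro order_trans[OF norm_mult_ineq] mult_left_mono) auto
    then show ?thesis using cm assms by (simp add: mult_left_mono algebra_simps)
  qed
  then have "norm (circle_remainder n r) \<le> 2 * r * norm (x ^ Suc n) * Henstock_Kurzweil_Integration.content {0..2*pi}"
    using assms by (intro has_integral_bound_real[OF _ _ has_integral_circle_remainder]) auto
  then show ?thesis by simp
qed

lemma circle_integral_eq_power:
  assumes "0 < r" "r < \<rho>"
  shows "circle_integral n r = (2 * pi) *\<^sub>R x ^ n"
proof -
  obtain c where c: "\<And>r. r \<in> {0<..<\<rho>} \<Longrightarrow> circle_integral n r = c"
    using circle_integral_constant[of n] by blast
  have "\<forall>\<^sub>F r in at_right 0. 0 < (r::real)" by (simp add: eventually_at_filter)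
  moreover have "\<forall>\<^sub>F r in at_right 0. r < \<rho>"
    using order_tendstoD(2)[OF tendsto_ident_at radius_pos] .
  moreover have "((\<lambda>r. r * norm x) \<longlongrightarrow> 0) (at_right 0)"
    by (intro tendsto_mult_left_zero tendsto_ident_at)
  then have "\<forall>\<^sub>F r in at_right 0. r * norm x < 1/2"
    by (rule order_tendstoD(2)) simp
  ultimately have ev: "\<forall>\<^sub>F r in at_right 0. 0 < r \<and> r < \<rho> \<and> r * norm x \<le> 1/2"
    by eventually_elim simp
  have "\<forall>\<^sub>F r in at_right 0. norm (circle_remainder n r) \<le> 2 * r * norm (x ^ Suc n) * (2 * pi)"
    using ev by eventually_elim (intro norm_circle_remainder_le, auto)
  moreover have "((\<lambda>r. 2 * r * norm (x ^ Suc n) * (2 * pi)) \<longlongrightarrow> 0) (at_right 0)"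
    by (intro tendsto_mult_left_zero tendsto_mult_right_zero tendsto_ident_at)
  ultimately have "(circle_remainder n \<longlongrightarrow> 0) (at_right 0)"
    by (rule Lim_null_comparison)
  moreover have "\<forall>\<^sub>F r in at_right 0. circle_remainder n r = c - (2 * pi) *\<^sub>R x ^ n"
    using ev by eventually_elim (use c circle_integral_eq in \<open>auto simp: algebra_simps\<close>)
  ultimately have "((\<lambda>r. c - (2 * pi) *\<^sub>R x ^ n) \<longlongrightarrow> 0) (at_right (0::real))"
    by (simp add: tendsto_cong)
  then have "c = (2 * pi) *\<^sub>R x ^ n" by (simp add: tendsto_const_iff)
  then show ?thesis using c assms by simp
qed

text \<open>Cauchy's estimate; the bound is the maximum of \<open>\<parallel>res\<parallel>\<close> on the circle of radius \<open>r\<close>.\<close>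

lemma norm_power_mult_radius_bounded:
  assumes "0 < r" "r < \<rho>"
  shows "\<exists>B. \<forall>n. norm (x ^ n) * r ^ n \<le> B"
proof -
  have "compact ((\<lambda>\<theta>. res (complex_of_real r * cis \<theta>)) ` {0..2*pi})"
    by (rule compact_continuous_image[OF continuous_on_res_circle[OF assms]]) simp
  then obtain b where b: "b > 0" "\<And>\<theta>. \<theta> \<in> {0..2*pi} \<Longrightarrow> norm (res (complex_of_real r * cis \<theta>)) \<le> b"
    using compact_imp_bounded bounded_pos by (metis imageI)
  have "norm (x ^ n) * r ^ n \<le> b" for n
  proof -
    have "norm (weighted_res n (complex_of_real r * cis \<theta>)) \<le> inverse r ^ n * b" if "\<theta> \<in> {0..2*pi}" for \<theta>
    proof -
      have "norm (weighted_res n (complex_of_real r * cis \<theta>)) = inverse r ^ n * norm (res (complex_of_real r * cis \<theta>))"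
        unfolding weighted_res_def using assms by (simp add: norm_mult norm_power norm_inverse)
      also have "\<dots> \<le> inverse r ^ n * b"
        using assms b(2)[OF that] by (intro mult_left_mono) auto
      finally show ?thesis .
    qed
    moreover have "((\<lambda>\<theta>. weighted_res n (complex_of_real r * cis \<theta>)) has_integral circle_integral n r) {0..2*pi}"
      unfolding circle_integral_def using assms
      by (intro integrable_integral integrable_continuous_interval continuous_on_weighted_res_circle)
    ultimately have "norm (circle_integral n r) \<le> inverse r ^ n * b * Henstock_Kurzweil_Integration.content {0..2*pi}"
      using b assms by (intro has_integral_bound_real) auto
    then have "norm (x ^ n) \<le> inverse r ^ n * b"
      using circle_integral_eq_power[OF assms] by simp
    then have "norm (x ^ n) * r ^ n \<le> inverse r ^ n * b * r ^ n"
      using assms by (intro mult_right_mono) auto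
    also have "\<dots> = b" using assms by (simp add: power_inverse field_simps)
    finally show ?thesis .
  qed
  then show ?thesis by blast
qed

end

section \<open>Norm and spectrum of positive elements\<close>

lemma norm_selfadjoint_le:
  fixes h :: "'a::cstar_algebra"
  assumes selfadjoint: "cstar h = h" and "0 \<le> s"
    and spectrum: "\<And>l. s < cmod l \<Longrightarrow> invertible_elem (h - of_complex l)"
  shows "norm h \<le> s"
proof (rule ccontr)
  assume "\<not> norm h \<le> s"
  define M where "M = norm h"
  have Ms: "s < M" using \<open>\<not> norm h \<le> s\<close> by (simp add: M_def)
  \<comment> \<open>reciprocals of two points strictly between \<open>s\<close> and \<open>M\<close>\<close>
  define \<rho> where "\<rho> = 2 / (M + s)"
  define r where "r = 4 / (3 * M + s)"
  have r: "0 < r" "r < \<rho>" "M * r > 1"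
    using Ms \<open>0 \<le> s\<close> by (simp_all add: r_def \<rho>_def divide_simps)
  have "\<rho> > 0" using Ms \<open>0 \<le> s\<close> by (simp add: \<rho>_def)
  interpret resolvent_disc h \<rho>
  proof
    show "\<rho> > 0" by fact
    fix \<mu> :: complex assume \<mu>: "cmod \<mu> < \<rho>"
    show "invertible_elem (1 - of_complex \<mu> * h)"
    proof (cases "\<mu> = 0")
      case False
      have "1 / \<rho> < 1 / cmod \<mu>"
        using \<mu> False \<open>\<rho> > 0\<close> by (intro divide_strict_left_mono) auto
      then have "1 / \<rho> < cmod (inverse \<mu>)"
        by (metis norm_inverse inverse_eq_divide)
      then have "s < cmod (inverse \<mu>)"
        using Ms by (simp add: \<rho>_def)
      then have "invertible_elem (of_complex (- \<mu>) * (h - of_complex (inverse \<mu>)))"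
        using False by (simp add: invertible_elem_scale spectrum)
      moreover have "of_complex (- \<mu>) * (h - of_complex (inverse \<mu>)) = 1 - of_complex \<mu> * h"
        using of_complex_mult_inverse[OF False, where 'a='a]
        by (simp add: right_diff_distrib of_complex_minus)
      ultimately show ?thesis by simp
    qed simp
  qed
  obtain B where B: "\<And>n. norm (h ^ n) * r ^ n \<le> B"
    using norm_power_mult_radius_bounded[OF r(1,2)] by blast
  obtain j where j: "B < (M * r) ^ j" using real_arch_pow[OF r(3)] by blast
  have "(M * r) ^ j \<le> (M * r) ^ (2 ^ j)"
    by (rule power_increasing) (use r less_exp[of j] in auto)
  also have "\<dots> = norm (h ^ (2 ^ j)) * r ^ (2 ^ j)"
    by (simp add: norm_power2_selfadjoint[OF selfadjoint] M_def power_mult_distrib)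
  also have "\<dots> \<le> B" by (rule B)
  finally show False using j by simp
qed

lemma cpositive_imp_selfadjoint: "cpositive a \<Longrightarrow> cstar a = a"
  by (simp add: cpositive_def)

lemma cpositive_invertible_elem:
  "cpositive a \<Longrightarrow> l \<notin> complex_of_real ` {0..} \<Longrightarrow> invertible_elem (a - of_complex l)"
  unfolding cpositive_def using cspectrum_iff by blast

text \<open>The spectrum of \<open>\<parallel>a\<parallel> - a\<close> lies in \<open>[0, \<parallel>a\<parallel>]\<close>.\<close>

lemma norm_norm_minus_cpositive_le:
  fixes a :: "'a::cstar_algebra"
  assumes "cpositive a"
  shows "norm (of_real (norm a) - a) \<le> norm a"
proof (rule norm_selfadjoint_le)
  show "cstar (of_real (norm a) - a) = of_real (norm a) - a"
    using cpositive_imp_selfadjoint[OF assms]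
    by (metis cstar_diff cstar_of_complex complex_cnj_complex_of_real of_complex_of_real)
  fix l assume l: "norm a < cmod l"
  have eq: "of_real (norm a) - a - of_complex l = - (a - of_complex (complex_of_real (norm a) - l))"
    by (simp add: of_complex_diff)
  show "invertible_elem (of_real (norm a) - a - of_complex l)"
    unfolding eq
  proof (rule invertible_elem_minus, cases "norm a < cmod (complex_of_real (norm a) - l)")
    case True
    then show "invertible_elem (a - of_complex (complex_of_real (norm a) - l))"
      by (rule invertible_elem_diff_of_complex)
  next
    case False
    have "complex_of_real (norm a) - l \<notin> complex_of_real ` {0..}"
    proof
      assume "complex_of_real (norm a) - l \<in> complex_of_real ` {0..}"
      then obtain u where u: "u \<ge> 0" "complex_of_real (norm a) - l = complex_of_real u" by auto
      then have "l = complex_of_real (norm a - u)" by (simp add: algebra_simps)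
      moreover have "u \<le> norm a" using False u by simp
      ultimately have "cmod l = norm a - u" by (simp only: norm_of_real)
      then show False using l u by simp
    qed
    then show "invertible_elem (a - of_complex (complex_of_real (norm a) - l))"
      by (rule cpositive_invertible_elem[OF assms])
  qed
qed simp

lemma cle_imp_norm_le:
  fixes a b :: "'a::cstar_algebra"
  assumes a: "cpositive a" and ab: "cle a b"
  shows "norm a \<le> norm b"
proof (rule norm_selfadjoint_le)
  show "cstar a = a" using cpositive_imp_selfadjoint[OF a] .
  define s where "s = norm (b - a)"
  define w where "w = of_real s - (b - a)"
  \<comment> \<open>\<open>a = b + w - s\<close> with \<open>\<parallel>w\<parallel> \<le> s\<close>\<close>
  have w: "norm w \<le> s"
    unfolding w_def s_def using ab by (intro norm_norm_minus_cpositive_le) (simp add: cle_def)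
  fix l assume l: "norm b < cmod l"
  show "invertible_elem (a - of_complex l)"
  proof (cases "l \<in> complex_of_real ` {0..}")
    case True
    then obtain u where u: "u \<ge> 0" "l = complex_of_real u" by auto
    have "cmod (complex_of_real (u + s)) = u + s"
      using u by (simp only: norm_of_real) (simp add: s_def)
    then have "norm (b + w) < cmod (complex_of_real (u + s))"
      using norm_triangle_ineq[of b w] w l u by simp
    then have "invertible_elem (b + w - of_complex (complex_of_real (u + s)))"
      by (rule invertible_elem_diff_of_complex)
    moreover have "b + w - of_complex (complex_of_real (u + s)) = a - of_complex l"
      unfolding w_def u(2) by (simp add: algebra_simps of_complex_add)
    ultimately show ?thesis by simp
  qed (rule cpositive_invertible_elem[OF a])
qed simp

section \<open>C*-algebra valued metric spaces\<close>

lemma cstar_metric_commute: "cstar_metric d \<Longrightarrow> d x y = d y x"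
  by (simp add: cstar_metric_def)

lemma cstar_metric_eq_0_iff: "cstar_metric d \<Longrightarrow> norm (d x y) = 0 \<longleftrightarrow> x = y"
  by (simp add: cstar_metric_def)

lemma cstar_metric_norm_triangle:
  assumes "cstar_metric (d :: 'x \<Rightarrow> 'x \<Rightarrow> 'a::cstar_algebra)"
  shows "norm (d x z) \<le> norm (d x y) + norm (d y z)"
proof -
  have "norm (d x z) \<le> norm (d x y + d y z)"
    using assms by (intro cle_imp_norm_le) (auto simp: cstar_metric_def)
  then show ?thesis using norm_triangle_ineq order_trans by blast
qed

lemma cstar_metric_tendsto_compare:
  assumes "cstar_metric d"
    and "(\<lambda>n. norm (d (a n) u)) \<longlonglongrightarrow> 0" "(\<lambda>n. norm (d (a n) (b n))) \<longlonglongrightarrow> 0"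
  shows "(\<lambda>n. norm (d (b n) u)) \<longlonglongrightarrow> 0"
proof (rule Lim_null_comparison)
  have "norm (d (b n) u) \<le> norm (d (a n) (b n)) + norm (d (a n) u)" for n
    using cstar_metric_norm_triangle[OF assms(1), of "b n" u "a n"]
      cstar_metric_commute[OF assms(1), of "b n" "a n"] by simp
  then show "\<forall>\<^sub>F n in sequentially. norm (norm (d (b n) u)) \<le> norm (d (a n) (b n)) + norm (d (a n) u)"
    by (simp add: always_eventually)
  show "(\<lambda>n. norm (d (a n) (b n)) + norm (d (a n) u)) \<longlonglongrightarrow> 0"
    using tendsto_add[OF assms(3,2)] by simp
qed

lemma cstar_metric_limit_unique:
  assumes "cstar_metric d"
    and "(\<lambda>n. norm (d (s n) p)) \<longlonglongrightarrow> 0" "(\<lambda>n. norm (d (s n) q)) \<longlonglongrightarrow> 0"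
  shows "p = q"
proof -
  have "(\<lambda>n. norm (d p q)) \<longlonglongrightarrow> 0"
    using cstar_metric_tendsto_compare[OF assms(1,3), of "\<lambda>_. p"] assms(2)
    by (simp add: cstar_metric_commute[OF assms(1), of p])
  then show ?thesis using cstar_metric_eq_0_iff[OF assms(1)] LIMSEQ_const_iff by blast
qed

lemma cstar_metric_geometric_tail:
  assumes "cstar_metric d" "0 \<le> k" "k < 1"
    and step: "\<And>n. n \<ge> 1 \<Longrightarrow> norm (d (s n) (s (Suc n))) \<le> C * k ^ n"
    and "n \<ge> 1"
  shows "norm (d (s n) (s (n + m))) \<le> C * k ^ n / (1 - k)"
proof -
  have "norm (d (s n) (s (n + m))) \<le> C * k ^ n * (\<Sum>i<m. k ^ i)"
  proof (induction m)
    case (Suc m)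
    have "norm (d (s n) (s (n + Suc m)))
        \<le> norm (d (s n) (s (n + m))) + norm (d (s (n + m)) (s (Suc (n + m))))"
      using cstar_metric_norm_triangle[OF assms(1)] by simp
    also have "\<dots> \<le> C * k ^ n * (\<Sum>i<m. k ^ i) + C * k ^ (n + m)"
      using Suc step[of "n + m"] \<open>n \<ge> 1\<close> by (intro add_mono) auto
    finally show ?case by (simp add: algebra_simps power_add)
  qed (use assms(1) in \<open>simp add: cstar_metric_def\<close>)
  also have "\<dots> = C * k ^ n * (1 - k ^ m) / (1 - k)"
    using \<open>k < 1\<close> by (simp add: sum_gp_strict)
  also have "\<dots> \<le> C * k ^ n / (1 - k)"
  proof (rule divide_right_mono)
    have "0 \<le> C * k ^ n"
      using step[OF \<open>n \<ge> 1\<close>] order_trans[OF norm_ge_zero] by blast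
    then show "C * k ^ n * (1 - k ^ m) \<le> C * k ^ n"
      using assms(2,3) by (simp add: mult_left_le power_le_one)
  qed (use \<open>k < 1\<close> in simp)
  finally show ?thesis .
qed

lemma cstar_metric_Cauchy_geometric:
  assumes "cstar_metric d" "0 \<le> k" "k < 1"
    and "\<And>n. n \<ge> 1 \<Longrightarrow> norm (d (s n) (s (Suc n))) \<le> C * k ^ n"
  shows "\<forall>e>0. \<exists>N. \<forall>n\<ge>N. \<forall>m\<ge>N. norm (d (s n) (s m)) < e"
proof (intro allI impI)
  fix e :: real assume "e > 0"
  have "(\<lambda>n. C * k ^ n / (1 - k)) \<longlonglongrightarrow> 0"
    using assms(2,3) by (intro tendsto_divide_zero tendsto_mult_right_zero LIMSEQ_power_zero) auto
  from order_tendstoD(2)[OF this \<open>e > 0\<close>]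
  obtain N where N: "\<And>n. n \<ge> N \<Longrightarrow> C * k ^ n / (1 - k) < e"
    by (auto simp: eventually_sequentially)
  have close: "norm (d (s n) (s m)) < e" if "max N 1 \<le> n" "n \<le> m" for n m
    using cstar_metric_geometric_tail[OF assms, of n "m - n"] N[of n] that by simp
  show "\<exists>N. \<forall>n\<ge>N. \<forall>m\<ge>N. norm (d (s n) (s m)) < e"
  proof (intro exI allI impI)
    fix n m assume "max N 1 \<le> n" "max N 1 \<le> m"
    then show "norm (d (s n) (s m)) < e"
      using close[of n m] close[of m n] cstar_metric_commute[OF assms(1), of "s n" "s m"]
      by (cases "n \<le> m") auto
  qed
qed

lemma funpow_fixpoint: "f u = u \<Longrightarrow> (f ^^ n) u = u"
  by (induction n) auto

lemma orbitally_continuous_at_fixpoint: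
  assumes "cstar_metric d" "orbitally_continuous_at d T u"
    and lim: "(\<lambda>n. norm (d ((T ^^ n) x) u)) \<longlonglongrightarrow> 0"
  shows "T u = u"
proof (rule cstar_metric_limit_unique[OF assms(1)])
  have "strict_mono (Suc :: nat \<Rightarrow> nat)" by (simp add: strict_mono_Suc_iff)
  then show "(\<lambda>i. norm (d ((T ^^ (Suc i + 1)) x) (T u))) \<longlonglongrightarrow> 0"
    using assms(2) LIMSEQ_Suc[OF lim] unfolding orbitally_continuous_at_def by blast
  show "(\<lambda>i. norm (d ((T ^^ (Suc i + 1)) x) u)) \<longlonglongrightarrow> 0"
    using LIMSEQ_Suc[OF LIMSEQ_Suc[OF lim]] by simp
qed

section \<open>Orbits of two maps that approach each other geometrically\<close>

locale orbit_contraction =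
  fixes d :: "'x \<Rightarrow> 'x \<Rightarrow> 'a::cstar_algebra"
    and T R :: "'x \<Rightarrow> 'x"
    and k c :: "'x \<Rightarrow> 'x \<Rightarrow> real"
  assumes metric: "cstar_metric d"
    and complete: "cstar_complete d"
    and rate_nonneg: "0 \<le> k x y" and rate_less_1: "k x y < 1" and weight_nonneg: "0 \<le> c x y"
    and orbit_bound: "n \<ge> 1 \<Longrightarrow> norm (d ((T ^^ n) x) ((R ^^ n) y)) \<le> k x y ^ n * c x y"
begin

lemma orbit_step_bound:
  assumes "n \<ge> 1"
  shows "norm (d ((T ^^ n) x) ((T ^^ Suc n) x))
    \<le> (c x x + c (T x) x) * max (k x x) (k (T x) x) ^ n"
proof -
  let ?k = "max (k x x) (k (T x) x)"
  have "norm (d ((T ^^ n) x) ((R ^^ n) x)) \<le> ?k ^ n * c x x"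
    by (rule order_trans[OF orbit_bound[OF assms]])
      (intro mult_right_mono power_mono; simp add: rate_nonneg weight_nonneg)
  moreover have "norm (d ((T ^^ n) (T x)) ((R ^^ n) x)) \<le> ?k ^ n * c (T x) x"
    by (rule order_trans[OF orbit_bound[OF assms]])
      (intro mult_right_mono power_mono; simp add: rate_nonneg weight_nonneg)
  moreover have "(T ^^ Suc n) x = (T ^^ n) (T x)" by (simp only: funpow_Suc_right o_apply)
  then have "norm (d ((T ^^ n) x) ((T ^^ Suc n) x))
      \<le> norm (d ((T ^^ n) x) ((R ^^ n) x)) + norm (d ((T ^^ n) (T x)) ((R ^^ n) x))"
    using cstar_metric_norm_triangle[OF metric, of "(T ^^ n) x" "(T ^^ n) (T x)" "(R ^^ n) x"]
      cstar_metric_commute[OF metric, of "(R ^^ n) x"] by simp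
  ultimately show ?thesis by (simp add: algebra_simps)
qed

lemma orbits_converge:
  obtains u where "(\<lambda>n. norm (d ((T ^^ n) x) u)) \<longlonglongrightarrow> 0" "(\<lambda>n. norm (d ((R ^^ n) x) u)) \<longlonglongrightarrow> 0"
proof -
  have "\<forall>e>0. \<exists>N. \<forall>n\<ge>N. \<forall>m\<ge>N. norm (d ((T ^^ n) x) ((T ^^ m) x)) < e"
    by (rule cstar_metric_Cauchy_geometric[OF metric _ _ orbit_step_bound])
      (auto simp: rate_nonneg rate_less_1 le_max_iff_disj)
  then obtain u where u: "(\<lambda>n. norm (d ((T ^^ n) x) u)) \<longlonglongrightarrow> 0"
    using complete[unfolded cstar_complete_def, rule_format, of "\<lambda>n. (T ^^ n) x"] by blast
  have "\<forall>\<^sub>F n in sequentially. norm (norm (d ((T ^^ n) x) ((R ^^ n) x))) \<le> k x x ^ n * c x x"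
    by (rule eventually_sequentiallyI[of 1]) (simp add: orbit_bound)
  moreover have "(\<lambda>n. k x x ^ n * c x x) \<longlonglongrightarrow> 0"
    by (intro tendsto_mult_left_zero LIMSEQ_power_zero) (simp add: rate_nonneg rate_less_1)
  ultimately have "(\<lambda>n. norm (d ((T ^^ n) x) ((R ^^ n) x))) \<longlonglongrightarrow> 0"
    by (rule Lim_null_comparison)
  with u have "(\<lambda>n. norm (d ((R ^^ n) x) u)) \<longlonglongrightarrow> 0"
    by (rule cstar_metric_tendsto_compare[OF metric])
  with u show thesis by (rule that)
qed

lemma fixpoints_eq:
  assumes "T u = u" "R v = v"
  shows "u = v"
proof -
  have "norm (d u v) \<le> k u v ^ n * c u v" if "n \<ge> 1" for n
    using orbit_bound[OF that, of u v] by (simp add: funpow_fixpoint assms)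
  moreover have "(\<lambda>n. k u v ^ n * c u v) \<longlonglongrightarrow> 0"
    by (intro tendsto_mult_left_zero LIMSEQ_power_zero) (simp add: rate_nonneg rate_less_1)
  ultimately have "norm (d u v) \<le> 0"
    using LIMSEQ_le_const by blast
  then show ?thesis using cstar_metric_eq_0_iff[OF metric] by (simp add: order_antisym)
qed

lemma common_fixpoint:
  assumes "orbitally_continuous d T" "orbitally_continuous d R"
  obtains u where "T u = u" "R u = u"
proof -
  fix x
  obtain u where "(\<lambda>n. norm (d ((T ^^ n) x) u)) \<longlonglongrightarrow> 0" "(\<lambda>n. norm (d ((R ^^ n) x) u)) \<longlonglongrightarrow> 0"
    by (rule orbits_converge)
  then have "T u = u" "R u = u"
    using assms orbitally_continuous_at_fixpoint[OF metric] unfolding orbitally_continuous_def by blast+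
  then show thesis by (rule that)
qed

end

theorem corollary3p21:
  fixes d :: "'x \<Rightarrow> 'x \<Rightarrow> 'a::cstar_algebra"
    and T S :: "'x \<Rightarrow> 'x"
    and q \<delta> :: "'x \<Rightarrow> 'x \<Rightarrow> 'a"
  assumes "cstar_metric d"
    and "cstar_complete d"
    and "\<And>x y. cpositive_central (q x y)"
    and "\<And>x y. norm (q x y) < 1"
    and "\<And>x y. cpositive (\<delta> x y)"
    and "\<And>x y n. n \<ge> 1 \<Longrightarrow> cle (d ((T ^^ n) x) (((S \<circ> T) ^^ n) y)) ((q x y) ^ n * \<delta> x y)"
    and "orbitally_continuous d T"
    and "orbitally_continuous d (S \<circ> T)"
  shows "\<exists>!u. T u = u \<and> S u = u"
proof -
  interpret orbit_contraction d T "S \<circ> T" "\<lambda>x y. norm (q x y)" "\<lambda>x y. norm (\<delta> x y)"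
  proof
    fix x y and n :: nat assume "n \<ge> 1"
    have "norm (d ((T ^^ n) x) (((S \<circ> T) ^^ n) y)) \<le> norm (q x y ^ n * \<delta> x y)"
      using assms(1) assms(6)[OF \<open>n \<ge> 1\<close>] by (intro cle_imp_norm_le) (auto simp: cstar_metric_def)
    also have "\<dots> \<le> norm (q x y) ^ n * norm (\<delta> x y)"
      by (metis norm_mult_ineq norm_power_ineq mult_right_mono norm_ge_zero order_trans)
    finally show "norm (d ((T ^^ n) x) (((S \<circ> T) ^^ n) y)) \<le> norm (q x y) ^ n * norm (\<delta> x y)" .
  qed (use assms(1,2,4) in simp_all)
  obtain u where u: "T u = u" "(S \<circ> T) u = u"
    using common_fixpoint[OF assms(7,8)] .
  show ?thesis
  proof (rule ex1I)
    show "T u = u \<and> S u = u" using u by simp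
    fix v assume "T v = v \<and> S v = v"
    then show "v = u" using fixpoints_eq[of v u] u by simp
  qed
qed
end
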